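(* Let $M\models\mathrm{AA}$ be extremally $\aleph_0$-saturated. If $x\in M$ is normal and $y\in M$, then there is at most one pair $(u,v)\in M^2$ with $y=xu+v$ and $v+1\le x$. Moreover, writing, for normal $x$ and arbitrary $y$, $y=x\cdot f(x,y)+g(x,y)$ with $g(x,y)+1\le x$, the functions $f$ and $g$ are definable on the set $\{(x,y)\in M^2: |x|=1\}$.
   Context: Structures are complete metric spaces of diameter at most $1$ in the language $L=\{+,\cdot,\wedge,\vee,0,1\}$ (operations $1$-Lipschitz, $d$ the only relation symbol). Affine formulas are built from $1$ and atomic formulas $d(t_1,t_2)$ using $+$, scalar multiplication by reals, $\sup_x$, $\inf_x$. $\mathrm{AA}$ is the set of all closed affine conditions true in every model of first-order Peano arithmetic (formulated in $L$ with lattice operations min/max and discrete metric). $|x|=d(x,0)$; $x$ is normal if $|x|=1$; $x\le y$ means $x\wedge y=x$. A model $M$ is extremally $\aleph_0$-saturated if for every finite $A\subseteq M$ every extreme type over $A$ (an extreme point of the compact convex set of positive linear functionals $p$ with $p(1)=1$ on affine formulas in one variable with parameters from $A$, modulo the theory of $(M,a)_{a\in A}$) is realized in $M$. For a definable set $E\subseteq M^2$ (here $E=\{(x,y):|x|=1\}$), a function $h:E\to M$ is definable if $(x,y,z)\mapsto d(h(x,y),z)$ is a uniform limit on $E\times M$ of interpretations of affine formulas with parameters from $M$. *)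

theory Defs
  imports Main "HOL-Analysis.Analysis"
begin

record 'a lstr =
  Mcar  :: "'a set"
  Md    :: "'a \<Rightarrow> 'a \<Rightarrow> real"
  Madd  :: "'a \<Rightarrow> 'a \<Rightarrow> 'a"
  Mmul  :: "'a \<Rightarrow> 'a \<Rightarrow> 'a"
  Mmeet :: "'a \<Rightarrow> 'a \<Rightarrow> 'a"
  Mjoin :: "'a \<Rightarrow> 'a \<Rightarrow> 'a"
  Mzero :: 'a
  Mone  :: 'a

definition lip2 :: "'a lstr \<Rightarrow> ('a \<Rightarrow> 'a \<Rightarrow> 'a) \<Rightarrow> bool" where
  "lip2 S f \<longleftrightarrow> (\<forall>x\<in>Mcar S. \<forall>y\<in>Mcar S. f x y \<in> Mcar S) \<and>
     (\<forall>x\<in>Mcar S. \<forall>x'\<in>Mcar S. \<forall>y\<in>Mcar S.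
        Md S (f x y) (f x' y) \<le> Md S x x' \<and> Md S (f y x) (f y x') \<le> Md S x x')"

definition is_Lstr :: "'a lstr \<Rightarrow> bool" where
  "is_Lstr S \<longleftrightarrow>
     Mzero S \<in> Mcar S \<and> Mone S \<in> Mcar S \<and>
     (\<forall>x\<in>Mcar S. \<forall>y\<in>Mcar S. 0 \<le> Md S x y \<and> Md S x y \<le> 1 \<and>
         (Md S x y = 0 \<longleftrightarrow> x = y) \<and> Md S x y = Md S y x) \<and>
     (\<forall>x\<in>Mcar S. \<forall>y\<in>Mcar S. \<forall>z\<in>Mcar S. Md S x z \<le> Md S x y + Md S y z) \<and>
     (\<forall>s::nat \<Rightarrow> 'a. (\<forall>n. s n \<in> Mcar S) \<longrightarrow>
         (\<forall>e>0. \<exists>N. \<forall>m\<ge>N. \<forall>n\<ge>N. Md S (s m) (s n) < e) \<longrightarrow>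
         (\<exists>l\<in>Mcar S. \<forall>e>0. \<exists>N. \<forall>n\<ge>N. Md S (s n) l < e)) \<and>
     lip2 S (Madd S) \<and> lip2 S (Mmul S) \<and> lip2 S (Mmeet S) \<and> lip2 S (Mjoin S)"

datatype 'a tm = V nat | Par 'a | Plus "'a tm" "'a tm" | Times "'a tm" "'a tm"
  | Meet "'a tm" "'a tm" | Join "'a tm" "'a tm" | Zero | One

primrec tm_eval :: "'a lstr \<Rightarrow> (nat \<Rightarrow> 'a) \<Rightarrow> 'a tm \<Rightarrow> 'a" where
  "tm_eval S e (V n) = e n"
| "tm_eval S e (Par a) = a"
| "tm_eval S e (Plus s t) = Madd S (tm_eval S e s) (tm_eval S e t)"
| "tm_eval S e (Times s t) = Mmul S (tm_eval S e s) (tm_eval S e t)"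
| "tm_eval S e (Meet s t) = Mmeet S (tm_eval S e s) (tm_eval S e t)"
| "tm_eval S e (Join s t) = Mjoin S (tm_eval S e s) (tm_eval S e t)"
| "tm_eval S e Zero = Mzero S"
| "tm_eval S e One = Mone S"

primrec fv_tm :: "'a tm \<Rightarrow> nat set" where
  "fv_tm (V n) = {n}"
| "fv_tm (Par a) = {}"
| "fv_tm (Plus s t) = fv_tm s \<union> fv_tm t"
| "fv_tm (Times s t) = fv_tm s \<union> fv_tm t"
| "fv_tm (Meet s t) = fv_tm s \<union> fv_tm t"
| "fv_tm (Join s t) = fv_tm s \<union> fv_tm t"
| "fv_tm Zero = {}"
| "fv_tm One = {}"

datatype 'a af = AOne | ADist "'a tm" "'a tm" | AAdd "'a af" "'a af"
  | AScal real "'a af" | ASup nat "'a af" | AInf nat "'a af"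

primrec af_eval :: "'a lstr \<Rightarrow> (nat \<Rightarrow> 'a) \<Rightarrow> 'a af \<Rightarrow> real" where
  "af_eval S e AOne = 1"
| "af_eval S e (ADist s t) = Md S (tm_eval S e s) (tm_eval S e t)"
| "af_eval S e (AAdd \<phi> \<psi>) = af_eval S e \<phi> + af_eval S e \<psi>"
| "af_eval S e (AScal r \<phi>) = r * af_eval S e \<phi>"
| "af_eval S e (ASup n \<phi>) = (SUP b\<in>Mcar S. af_eval S (e(n := b)) \<phi>)"
| "af_eval S e (AInf n \<phi>) = (INF b\<in>Mcar S. af_eval S (e(n := b)) \<phi>)"

primrec fv_af :: "'a af \<Rightarrow> nat set" where
  "fv_af AOne = {}"
| "fv_af (ADist s t) = fv_tm s \<union> fv_tm t"
| "fv_af (AAdd \<phi> \<psi>) = fv_af \<phi> \<union> fv_af \<psi>"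
| "fv_af (AScal r \<phi>) = fv_af \<phi>"
| "fv_af (ASup n \<phi>) = fv_af \<phi> - {n}"
| "fv_af (AInf n \<phi>) = fv_af \<phi> - {n}"

datatype 'a fo = FEq "'a tm" "'a tm" | FNeg "'a fo" | FConj "'a fo" "'a fo" | FEx nat "'a fo"

primrec fo_sat :: "'a lstr \<Rightarrow> (nat \<Rightarrow> 'a) \<Rightarrow> 'a fo \<Rightarrow> bool" where
  "fo_sat S e (FEq s t) = (tm_eval S e s = tm_eval S e t)"
| "fo_sat S e (FNeg \<phi>) = (\<not> fo_sat S e \<phi>)"
| "fo_sat S e (FConj \<phi> \<psi>) = (fo_sat S e \<phi> \<and> fo_sat S e \<psi>)"
| "fo_sat S e (FEx n \<phi>) = (\<exists>b\<in>Mcar S. fo_sat S (e(n := b)) \<phi>)"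

definition is_PA :: "'b lstr \<Rightarrow> bool" where
  "is_PA N \<longleftrightarrow>
     (let C = Mcar N; s = (\<lambda>x. Madd N x (Mone N));
          le = (\<lambda>x y. \<exists>z\<in>C. Madd N x z = y) in
     Mzero N \<in> C \<and> Mone N \<in> C \<and>
     (\<forall>x\<in>C. \<forall>y\<in>C. Madd N x y \<in> C \<and> Mmul N x y \<in> C) \<and>
     (\<forall>x\<in>C. \<forall>y\<in>C. Md N x y = (if x = y then 0 else 1)) \<and>
     (\<forall>x\<in>C. s x \<noteq> Mzero N) \<and>
     (\<forall>x\<in>C. \<forall>y\<in>C. s x = s y \<longrightarrow> x = y) \<and>
     (\<forall>x\<in>C. Madd N x (Mzero N) = x) \<and>
     (\<forall>x\<in>C. \<forall>y\<in>C. Madd N x (s y) = s (Madd N x y)) \<and>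
     (\<forall>x\<in>C. Mmul N x (Mzero N) = Mzero N) \<and>
     (\<forall>x\<in>C. \<forall>y\<in>C. Mmul N x (s y) = Madd N (Mmul N x y) x) \<and>
     (\<forall>x\<in>C. \<forall>y\<in>C. Mmeet N x y = (if le x y then x else y)) \<and>
     (\<forall>x\<in>C. \<forall>y\<in>C. Mjoin N x y = (if le x y then y else x)) \<and>
     (\<forall>(\<phi> :: 'b fo) k (e :: nat \<Rightarrow> 'b). set_fo \<phi> = {} \<longrightarrow> (\<forall>n. e n \<in> C) \<longrightarrow>
        fo_sat N (e(k := Mzero N)) \<phi> \<longrightarrow>
        (\<forall>a\<in>C. fo_sat N (e(k := a)) \<phi> \<longrightarrow> fo_sat N (e(k := s a)) \<phi>) \<longrightarrow>
        (\<forall>a\<in>C. fo_sat N (e(k := a)) \<phi>)))"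

text \<open>PA models are taken with carrier in nat
  (countable models suffice by downward Loewenheim-Skolem).\<close>
definition models_AA :: "'a lstr \<Rightarrow> bool" where
  "models_AA M \<longleftrightarrow>
     (\<forall>\<phi> :: nat af. fv_af \<phi> = {} \<and> set_af \<phi> = {} \<longrightarrow>
        (\<forall>N :: nat lstr. is_PA N \<longrightarrow> 0 \<le> af_eval N (\<lambda>_. Mzero N) \<phi>) \<longrightarrow>
        0 \<le> af_eval M (\<lambda>_. Mzero M) (map_af (\<lambda>_. Mzero M) \<phi>))"

definition in_dom :: "'a set \<Rightarrow> 'a af \<Rightarrow> bool" where
  "in_dom A \<phi> \<longleftrightarrow> fv_af \<phi> \<subseteq> {0} \<and> set_af \<phi> \<subseteq> A"

definition is_type :: "'a lstr \<Rightarrow> 'a set \<Rightarrow> ('a af \<Rightarrow> real) \<Rightarrow> bool" where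
  "is_type M A p \<longleftrightarrow>
     (\<forall>\<phi> \<psi>. in_dom A \<phi> \<and> in_dom A \<psi> \<longrightarrow> p (AAdd \<phi> \<psi>) = p \<phi> + p \<psi>) \<and>
     (\<forall>r \<phi>. in_dom A \<phi> \<longrightarrow> p (AScal r \<phi>) = r * p \<phi>) \<and>
     p AOne = 1 \<and>
     (\<forall>\<phi>. in_dom A \<phi> \<and> (\<forall>b\<in>Mcar M. 0 \<le> af_eval M (\<lambda>_. b) \<phi>) \<longrightarrow> 0 \<le> p \<phi>)"

definition is_extreme_type :: "'a lstr \<Rightarrow> 'a set \<Rightarrow> ('a af \<Rightarrow> real) \<Rightarrow> bool" where
  "is_extreme_type M A p \<longleftrightarrow> is_type M A p \<and>
     (\<forall>q r t. is_type M A q \<and> is_type M A r \<and> 0 < t \<and> t < 1 \<and>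
        (\<forall>\<phi>. in_dom A \<phi> \<longrightarrow> p \<phi> = t * q \<phi> + (1 - t) * r \<phi>) \<longrightarrow>
        (\<forall>\<phi>. in_dom A \<phi> \<longrightarrow> q \<phi> = r \<phi>))"

definition realized :: "'a lstr \<Rightarrow> 'a set \<Rightarrow> ('a af \<Rightarrow> real) \<Rightarrow> bool" where
  "realized M A p \<longleftrightarrow> (\<exists>b\<in>Mcar M. \<forall>\<phi>. in_dom A \<phi> \<longrightarrow> p \<phi> = af_eval M (\<lambda>_. b) \<phi>)"

definition ext_aleph0_saturated :: "'a lstr \<Rightarrow> bool" where
  "ext_aleph0_saturated M \<longleftrightarrow>
     (\<forall>A p. finite A \<and> A \<subseteq> Mcar M \<and> is_extreme_type M A p \<longrightarrow> realized M A p)"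

definition normal :: "'a lstr \<Rightarrow> 'a \<Rightarrow> bool" where
  "normal M x \<longleftrightarrow> Md M x (Mzero M) = 1"

definition leq :: "'a lstr \<Rightarrow> 'a \<Rightarrow> 'a \<Rightarrow> bool" where
  "leq M x y \<longleftrightarrow> Mmeet M x y = x"

definition definable_E :: "'a lstr \<Rightarrow> ('a \<Rightarrow> 'a \<Rightarrow> 'a) \<Rightarrow> bool" where
  "definable_E M h \<longleftrightarrow>
     (\<forall>\<epsilon>>0. \<exists>\<phi>. fv_af \<phi> \<subseteq> {0,1,2} \<and> set_af \<phi> \<subseteq> Mcar M \<and>
        (\<forall>x\<in>Mcar M. \<forall>y\<in>Mcar M. \<forall>z\<in>Mcar M. normal M x \<longrightarrow>
           \<bar>Md M (h x y) z -
              af_eval M (\<lambda>n. if n = 0 then x else if n = 1 then y else z) \<phi>\<bar> \<le> \<epsilon>))"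

definition divrem :: "'a lstr \<Rightarrow> 'a \<Rightarrow> 'a \<Rightarrow> 'a \<Rightarrow> 'a \<Rightarrow> bool" where
  "divrem M x y u v \<longleftrightarrow> y = Madd M (Mmul M x u) v \<and> leq M (Madd M v (Mone M)) x"

end

theory Submission
  imports Defs
begin

text \<open>Write \<open>[a \<le> b]\<close> for \<open>d(a \<sqinter> b, a)\<close>, which vanishes exactly when \<open>a \<le> b\<close>. Three affine
  conditions are true in every model of PA (by uniqueness and existence of division with
  remainder there), hence in \<open>M\<close>:
  \<^item> \<open>d(u, u') \<le> d(xu + v, xu' + v') + [v + 1 \<le> x] + [v' + 1 \<le> x]\<close>,
  \<^item> \<open>d(v, v') \<le> d(u, u') + d(xu + v, xu' + v')\<close>,
  \<^item> \<open>inf\<^sub>u\<^sub>,\<^sub>v (d(y, xu + v) + [v + 1 \<le> x]) \<le> 2(1 - |x|)\<close>.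
  Call \<open>d(y, xu + v) + [v + 1 \<le> x]\<close> the defect of \<open>(u, v)\<close>. The first two conditions bound
  the distance between two pairs by their defects, and for normal \<open>x\<close> the third provides
  pairs of arbitrarily small defect. These form a Cauchy sequence whose limit, by completeness
  of \<open>M\<close>, has defect zero; it is the unique quotient and remainder. The same estimates give
  \<open>d(f(x, y), z) = inf\<^sub>u\<^sub>,\<^sub>v (d(u, z) + 2 defect(u, v))\<close> exactly, and likewise for \<open>g\<close>, so \<open>f\<close> and
  \<open>g\<close> are definable.\<close>

section \<open>Arithmetic in models of PA\<close>

locale PA_model =
  fixes N :: "'b lstr"
  assumes PA: "is_PA N"
begin

abbreviation "C \<equiv> Mcar N"
abbreviation "z \<equiv> Mzero N"
abbreviation "add \<equiv> Madd N"
abbreviation "mul \<equiv> Mmul N"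
abbreviation "S x \<equiv> add x (Mone N)"
abbreviation "le x y \<equiv> \<exists>t\<in>C. add x t = y"

lemma zero_in: "z \<in> C" and one_in: "Mone N \<in> C"
  and add_in: "x \<in> C \<Longrightarrow> y \<in> C \<Longrightarrow> add x y \<in> C"
  and mul_in: "x \<in> C \<Longrightarrow> y \<in> C \<Longrightarrow> mul x y \<in> C"
  and dist_eq: "x \<in> C \<Longrightarrow> y \<in> C \<Longrightarrow> Md N x y = (if x = y then 0 else 1)"
  and Suc_neq_zero: "x \<in> C \<Longrightarrow> S x \<noteq> z"
  and Suc_inj: "x \<in> C \<Longrightarrow> y \<in> C \<Longrightarrow> S x = S y \<Longrightarrow> x = y"
  and add_0: "x \<in> C \<Longrightarrow> add x z = x"
  and add_Suc: "x \<in> C \<Longrightarrow> y \<in> C \<Longrightarrow> add x (S y) = S (add x y)"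
  and mul_0: "x \<in> C \<Longrightarrow> mul x z = z"
  and mul_Suc: "x \<in> C \<Longrightarrow> y \<in> C \<Longrightarrow> mul x (S y) = add (mul x y) x"
  and meet_eq: "x \<in> C \<Longrightarrow> y \<in> C \<Longrightarrow> Mmeet N x y = (if le x y then x else y)"
  and join_eq: "x \<in> C \<Longrightarrow> y \<in> C \<Longrightarrow> Mjoin N x y = (if le x y then y else x)"
  using PA unfolding is_PA_def Let_def by simp_all

lemma Suc_in: "x \<in> C \<Longrightarrow> S x \<in> C"
  by (simp add: add_in one_in)

lemma Suc_inject: "x \<in> C \<Longrightarrow> y \<in> C \<Longrightarrow> S x = S y \<longleftrightarrow> x = y"
  using Suc_inj by blast

text \<open>Induction is only available for first-order definable properties, so each
  induction below supplies a formula \<open>\<phi>\<close> defining its property \<open>P\<close>.\<close>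
lemma induct:
  assumes "set_fo \<phi> = {}" and "\<forall>n. e n \<in> C"
    and "\<And>a. a \<in> C \<Longrightarrow> fo_sat N (e(k := a)) \<phi> = P a"
    and "P z" and "\<And>a. a \<in> C \<Longrightarrow> P a \<Longrightarrow> P (S a)" and "a \<in> C"
  shows "P a"
proof -
  have "\<forall>(\<phi> :: 'b fo) k e. set_fo \<phi> = {} \<longrightarrow> (\<forall>n. e n \<in> C) \<longrightarrow>
      fo_sat N (e(k := z)) \<phi> \<longrightarrow>
      (\<forall>a\<in>C. fo_sat N (e(k := a)) \<phi> \<longrightarrow> fo_sat N (e(k := S a)) \<phi>) \<longrightarrow>
      (\<forall>a\<in>C. fo_sat N (e(k := a)) \<phi>)"
    using PA unfolding is_PA_def Let_def by blast
  then have "\<forall>a\<in>C. fo_sat N (e(k := a)) \<phi>"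
    using assms(1-5) zero_in Suc_in by (metis (no_types, lifting))
  then show ?thesis
    using assms(3,6) by simp
qed

lemma add_0_left: "a \<in> C \<Longrightarrow> add z a = a"
  by (rule induct[where \<phi>="FEq (Plus Zero (V 0)) (V 0)" and e="\<lambda>_. z" and k=0])
     (auto simp: zero_in add_0 add_Suc one_in)

lemma add_Suc_left: "b \<in> C \<Longrightarrow> a \<in> C \<Longrightarrow> add (S b) a = S (add b a)"
  by (rule induct[where \<phi>="FEq (Plus (Plus (V 1) One) (V 0)) (Plus (Plus (V 1) (V 0)) One)"
        and e="\<lambda>n. if n = 1 then b else z" and k=0])
     (auto simp: zero_in add_0 add_Suc Suc_in add_in)

lemma add_commute: "a \<in> C \<Longrightarrow> b \<in> C \<Longrightarrow> add a b = add b a"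
  by (rule induct[where \<phi>="FEq (Plus (V 0) (V 1)) (Plus (V 1) (V 0))"
        and e="\<lambda>n. if n = 1 then b else z" and k=0])
     (auto simp: zero_in add_0 add_Suc Suc_in add_in add_0_left add_Suc_left)

lemma add_assoc: "a \<in> C \<Longrightarrow> b \<in> C \<Longrightarrow> c \<in> C \<Longrightarrow> add (add a b) c = add a (add b c)"
  by (rule induct[where \<phi>="FEq (Plus (Plus (V 1) (V 2)) (V 0)) (Plus (V 1) (Plus (V 2) (V 0)))"
        and e="\<lambda>n. if n = 1 then a else if n = 2 then b else z" and k=0])
     (auto simp: zero_in add_0 add_Suc Suc_in add_in)

lemma add_right_cancel: "v \<in> C \<Longrightarrow> w \<in> C \<Longrightarrow> a \<in> C \<Longrightarrow> add v a = add w a \<Longrightarrow> v = w"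
  by (rule induct[where
        \<phi>="FNeg (FConj (FEq (Plus (V 1) (V 0)) (Plus (V 2) (V 0))) (FNeg (FEq (V 1) (V 2))))"
        and e="\<lambda>n. if n = 1 then v else if n = 2 then w else z" and k=0
        and P="\<lambda>a. add v a = add w a \<longrightarrow> v = w", rule_format])
     (auto simp: zero_in add_0 add_Suc Suc_in add_in Suc_inject)

lemma add_left_cancel: "v \<in> C \<Longrightarrow> w \<in> C \<Longrightarrow> a \<in> C \<Longrightarrow> add a v = add a w \<Longrightarrow> v = w"
  using add_right_cancel add_commute by metis

lemma zero_or_Suc: "a \<in> C \<Longrightarrow> a = z \<or> (\<exists>b\<in>C. a = S b)"
  by (rule induct[where
        \<phi>="FNeg (FConj (FNeg (FEq (V 0) Zero)) (FNeg (FEx 1 (FEq (V 0) (Plus (V 1) One)))))"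
        and e="\<lambda>_. z" and k=0])
     (auto simp: zero_in)

lemma add_Suc_neq_self: "a \<in> C \<Longrightarrow> k \<in> C \<Longrightarrow> add a (S k) \<noteq> a"
  by (rule induct[where \<phi>="FNeg (FEq (Plus (V 0) (Plus (V 1) One)) (V 0))"
        and e="\<lambda>n. if n = 1 then k else z" and k=0])
     (auto simp: zero_in add_0_left Suc_neq_zero add_Suc_left Suc_in add_in Suc_inject)

lemma mul_add_distrib:
  assumes x: "x \<in> C" and a: "a \<in> C" and b: "b \<in> C"
  shows "mul x (add a b) = add (mul x a) (mul x b)"
proof (rule induct[where
      \<phi>="FEq (Times (V 1) (Plus (V 2) (V 0))) (Plus (Times (V 1) (V 2)) (Times (V 1) (V 0)))"
      and e="\<lambda>n. if n = 1 then x else if n = 2 then a else z" and k=0 and a=b])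
  fix c assume c: "c \<in> C" and IH: "mul x (add a c) = add (mul x a) (mul x c)"
  have "mul x (add a (S c)) = add (mul x (add a c)) x"
    using a c x by (simp add: add_Suc mul_Suc add_in)
  also have "\<dots> = add (mul x a) (add (mul x c) x)"
    using a c x IH by (simp add: add_assoc mul_in)
  also have "\<dots> = add (mul x a) (mul x (S c))"
    using c x by (simp add: mul_Suc)
  finally show "mul x (add a (S c)) = add (mul x a) (mul x (S c))" .
qed (auto simp: zero_in add_0 mul_in mul_0 x a b)

lemma le_total: "a \<in> C \<Longrightarrow> b \<in> C \<Longrightarrow> le a b \<or> le b a"
proof (rule induct[where \<phi>="FNeg (FConj (FNeg (FEx 2 (FEq (Plus (V 0) (V 2)) (V 1))))
                                          (FNeg (FEx 2 (FEq (Plus (V 1) (V 2)) (V 0)))))"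
      and e="\<lambda>n. if n = 1 then b else z" and k=0])
  fix a assume a: "a \<in> C" "b \<in> C" and "le a b \<or> le b a"
  then consider t where "t \<in> C" "add b t = a" | t where "t \<in> C" "add a t = b"
    by blast
  then show "le (S a) b \<or> le b (S a)"
  proof cases
    case 1
    then have "add b (S t) = S a"
      using a by (simp add: add_Suc)
    then show ?thesis using 1 Suc_in by blast
  next
    case 2
    consider "t = z" | t' where "t' \<in> C" "t = S t'"
      using zero_or_Suc 2 by blast
    then show ?thesis
    proof cases
      case 1
      then have "add b (S z) = S a"
        using 2 a by (simp add: add_0 add_Suc zero_in)
      then show ?thesis using zero_in Suc_in by blast
    next
      case 3: 2
      then have "add (S a) t' = b"
        using 2 a by (simp add: add_Suc add_Suc_left)
      then show ?thesis using 3 by blast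
    qed
  qed
qed (auto simp: zero_in add_0_left)

lemma one_le_nonzero:
  assumes "x \<in> C" "x \<noteq> z"
  shows "le (S z) x"
proof -
  obtain x' where "x' \<in> C" "x = S x'"
    using zero_or_Suc assms by blast
  moreover from this have "add (S z) x' = x"
    by (simp add: add_Suc_left add_0_left zero_in)
  ultimately show ?thesis by blast
qed

lemma division_exists:
  assumes x: "x \<in> C" "x \<noteq> z" and y: "y \<in> C"
  shows "\<exists>u\<in>C. \<exists>v\<in>C. y = add (mul x u) v \<and> le (S v) x"
proof (rule induct[where \<phi>="FEx 3 (FEx 4 (FConj (FEq (V 0) (Plus (Times (V 1) (V 3)) (V 4)))
                                              (FEx 5 (FEq (Plus (Plus (V 4) One) (V 5)) (V 1)))))"
      and e="\<lambda>n. if n = 1 then x else z" and k=0 and a=y])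
  show "\<exists>u\<in>C. \<exists>v\<in>C. z = add (mul x u) v \<and> le (S v) x"
    using x one_le_nonzero zero_in mul_0 add_0 by metis
  fix a assume a: "a \<in> C" and "\<exists>u\<in>C. \<exists>v\<in>C. a = add (mul x u) v \<and> le (S v) x"
  then obtain u v t where uv: "u \<in> C" "v \<in> C" "a = add (mul x u) v" "t \<in> C" "add (S v) t = x"
    by blast
  have Sa: "S a = add (mul x u) (S v)"
    using uv x by (simp add: add_Suc mul_in)
  consider "t = z" | t' where "t' \<in> C" "t = S t'"
    using zero_or_Suc uv by blast
  then show "\<exists>u\<in>C. \<exists>v\<in>C. S a = add (mul x u) v \<and> le (S v) x"
  proof cases
    case 1
    then have "S a = add (mul x (S u)) z"
      using Sa uv x by (simp add: mul_Suc add_0 add_in mul_in Suc_in)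
    then show ?thesis using one_le_nonzero x uv Suc_in zero_in by blast
  next
    case 2
    then have "add (S (S v)) t' = x"
      using uv by (metis add_Suc add_Suc_left Suc_in)
    then show ?thesis using Sa uv Suc_in 2 by blast
  qed
qed (auto simp: zero_in x y)

lemma division_larger_quotient_impossible:
  assumes x: "x \<in> C" and uvw: "u \<in> C" "v \<in> C" "v' \<in> C" "w \<in> C"
    and v: "le (S v) x" and eq: "add (mul x u) v = add (mul x (add u (S w))) v'"
  shows False
proof -
  define K where "K = add (mul x w) v'"
  have K: "K \<in> C"
    using K_def x uvw by (simp add: add_in mul_in)
  have "add (mul x u) v = add (mul x u) (add (add (mul x w) x) v')"
    using eq x uvw by (simp add: mul_add_distrib mul_Suc Suc_in add_assoc mul_in add_in)
  then have "v = add (add (mul x w) x) v'"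
    using add_left_cancel x uvw by (meson add_in mul_in)
  then have v_eq: "v = add x K"
    using x uvw unfolding K_def by (metis add_assoc add_commute mul_in)
  obtain t where t: "t \<in> C" "add (S v) t = x"
    using v by blast
  have "x = add v (S t)"
    using t uvw by (simp add: add_Suc add_Suc_left)
  also have "\<dots> = add x (S (add K t))"
    using v_eq x K t by (simp add: add_assoc Suc_in add_Suc)
  finally have "add x (S (add K t)) = x"
    by (rule sym)
  with add_Suc_neq_self[OF x add_in[OF K t(1)]] show False
    by contradiction
qed

lemma division_quotient_le_imp_eq:
  assumes x: "x \<in> C" and uv: "u \<in> C" "v \<in> C" "u' \<in> C" "v' \<in> C"
    and rem: "le (S v) x" and le: "le u u'" and eq: "add (mul x u) v = add (mul x u') v'"
  shows "u = u'"
proof -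
  obtain t where t: "t \<in> C" "add u t = u'"
    using le by blast
  consider "t = z" | w where "w \<in> C" "t = S w"
    using zero_or_Suc[OF t(1)] by blast
  then show ?thesis
  proof cases
    case 1
    then show ?thesis using t uv(1) add_0 by simp
  next
    case 2
    then have "add (mul x u) v = add (mul x (add u (S w))) v'"
      using eq t by simp
    with division_larger_quotient_impossible[OF x uv(1,2,4) 2(1) rem] show ?thesis
      by blast
  qed
qed

lemma division_unique:
  assumes x: "x \<in> C" and uv: "u \<in> C" "v \<in> C" "u' \<in> C" "v' \<in> C"
    and rem: "le (S v) x" "le (S v') x" and eq: "add (mul x u) v = add (mul x u') v'"
  shows "u = u'"
  using le_total[OF uv(1,3)]
proof
  assume "le u u'"
  then show ?thesis
    by (rule division_quotient_le_imp_eq[OF x uv rem(1) _ eq])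
next
  assume "le u' u"
  then show ?thesis
    by (rule division_quotient_le_imp_eq[OF x uv(3,4,1,2) rem(2) _ eq[symmetric], symmetric])
qed

end

section \<open>Affine conditions and their transfer from PA to AA\<close>

definition wf_Lstr :: "'a lstr \<Rightarrow> bool" where
  "wf_Lstr S \<longleftrightarrow> Mzero S \<in> Mcar S \<and> Mone S \<in> Mcar S \<and>
    (\<forall>x\<in>Mcar S. \<forall>y\<in>Mcar S. 0 \<le> Md S x y \<and> Md S x y \<le> 1 \<and>
      Madd S x y \<in> Mcar S \<and> Mmul S x y \<in> Mcar S \<and> Mmeet S x y \<in> Mcar S \<and> Mjoin S x y \<in> Mcar S)"

lemma tm_eval_in:
  "wf_Lstr S \<Longrightarrow> \<forall>n. e n \<in> Mcar S \<Longrightarrow> set_tm t \<subseteq> Mcar S \<Longrightarrow> tm_eval S e t \<in> Mcar S"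
  by (induction t) (auto simp: wf_Lstr_def)

lemma tm_eval_cong: "\<forall>n\<in>fv_tm t. e n = e' n \<Longrightarrow> tm_eval S e t = tm_eval S e' t"
  by (induction t) auto

lemma af_eval_cong: "\<forall>n\<in>fv_af \<phi>. e n = e' n \<Longrightarrow> af_eval S e \<phi> = af_eval S e' \<phi>"
proof (induction \<phi> arbitrary: e e')
  case (ADist s t)
  then show ?case
    using tm_eval_cong[of s e e' S] tm_eval_cong[of t e e' S] by simp
next
  case (AAdd \<phi> \<psi>)
  have "af_eval S e \<phi> = af_eval S e' \<phi>"
    by (rule AAdd.IH(1)) (use AAdd.prems in auto)
  moreover have "af_eval S e \<psi> = af_eval S e' \<psi>"
    by (rule AAdd.IH(2)) (use AAdd.prems in auto)
  ultimately show ?case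
    by simp
next
  case (ASup n \<phi>)
  have "af_eval S (e(n := b)) \<phi> = af_eval S (e'(n := b)) \<phi>" for b
    by (rule ASup.IH) (use ASup.prems in auto)
  then show ?case
    by simp
next
  case (AInf n \<phi>)
  have "af_eval S (e(n := b)) \<phi> = af_eval S (e'(n := b)) \<phi>" for b
    by (rule AInf.IH) (use AInf.prems in auto)
  then show ?case
    by simp
qed simp_all

lemma finite_fv_af: "finite (fv_af \<phi>)"
proof -
  have "finite (fv_tm t)" for t :: "'a tm"
    by (induction t) auto
  then show ?thesis
    by (induction \<phi>) auto
qed

lemma fv_af_map_af: "fv_af (map_af f \<phi>) = fv_af \<phi>"
proof -
  have "fv_tm (map_tm f t) = fv_tm t" for t
    by (induction t) auto
  then show ?thesis
    by (induction \<phi>) auto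
qed

text \<open>Every formula is bounded by \<open>af_bound\<close>, so the infima in \<open>af_eval\<close> range over sets
  bounded below and carry no junk values.\<close>
primrec af_bound :: "'a af \<Rightarrow> real" where
  "af_bound AOne = 1"
| "af_bound (ADist s t) = 1"
| "af_bound (AAdd \<phi> \<psi>) = af_bound \<phi> + af_bound \<psi>"
| "af_bound (AScal r \<phi>) = \<bar>r\<bar> * af_bound \<phi>"
| "af_bound (ASup n \<phi>) = af_bound \<phi>"
| "af_bound (AInf n \<phi>) = af_bound \<phi>"

lemma bdd_image_if_abs_le:
  fixes f :: "'a \<Rightarrow> real"
  assumes "\<And>a. a \<in> A \<Longrightarrow> \<bar>f a\<bar> \<le> B"
  shows "bdd_below (f ` A)" and "bdd_above (f ` A)"
proof -
  have bounds: "-B \<le> f a \<and> f a \<le> B" if "a \<in> A" for a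
    using assms[OF that] abs_le_iff[of "f a" B] by linarith
  show "bdd_below (f ` A)"
    using bounds by (intro bdd_belowI2) blast
  show "bdd_above (f ` A)"
    using bounds by (intro bdd_aboveI2) blast
qed

lemma abs_INF_le:
  fixes f :: "'a \<Rightarrow> real"
  assumes "A \<noteq> {}" and "\<And>a. a \<in> A \<Longrightarrow> \<bar>f a\<bar> \<le> B"
  shows "\<bar>INF a\<in>A. f a\<bar> \<le> B"
proof -
  obtain c where c: "c \<in> A"
    using assms(1) by blast
  have bounds: "-B \<le> f a \<and> f a \<le> B" if "a \<in> A" for a
    using assms(2)[OF that] abs_le_iff[of "f a" B] by linarith
  have "(INF a\<in>A. f a) \<le> f c"
    using bdd_image_if_abs_le(1)[OF assms(2)] c by (rule cINF_lower)
  moreover have "-B \<le> (INF a\<in>A. f a)"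
    using assms(1) bounds by (intro cINF_greatest) auto
  ultimately show ?thesis
    using bounds[OF c] by (simp add: abs_le_iff)
qed

lemma abs_SUP_le:
  fixes f :: "'a \<Rightarrow> real"
  assumes "A \<noteq> {}" and "\<And>a. a \<in> A \<Longrightarrow> \<bar>f a\<bar> \<le> B"
  shows "\<bar>SUP a\<in>A. f a\<bar> \<le> B"
proof -
  obtain c where c: "c \<in> A"
    using assms(1) by blast
  have bounds: "-B \<le> f a \<and> f a \<le> B" if "a \<in> A" for a
    using assms(2)[OF that] abs_le_iff[of "f a" B] by linarith
  have "f c \<le> (SUP a\<in>A. f a)"
    using c bdd_image_if_abs_le(2)[OF assms(2)] by (rule cSUP_upper)
  moreover have "(SUP a\<in>A. f a) \<le> B"
    using assms(1) bounds by (intro cSUP_least) auto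
  ultimately show ?thesis
    using bounds[OF c] by (simp add: abs_le_iff)
qed

lemma INF_INF_le:
  fixes F :: "'a \<Rightarrow> 'b \<Rightarrow> real"
  assumes "a \<in> A" and "b \<in> B" and "\<And>u v. u \<in> A \<Longrightarrow> v \<in> B \<Longrightarrow> 0 \<le> F u v"
  shows "(INF u\<in>A. INF v\<in>B. F u v) \<le> F a b"
proof -
  have "0 \<le> (INF v\<in>B. F u v)" if "u \<in> A" for u
    using assms(2,3) that by (intro cINF_greatest) auto
  then have "(INF u\<in>A. INF v\<in>B. F u v) \<le> (INF v\<in>B. F a v)"
    by (intro cINF_lower[OF bdd_belowI2[of _ 0]] assms(1))
  also have "\<dots> \<le> F a b"
    using assms by (intro cINF_lower[OF bdd_belowI2[of _ 0]]) auto
  finally show ?thesis .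
qed

lemma INF_eq_attained:
  fixes f :: "'a \<Rightarrow> 'b :: conditionally_complete_linorder"
  assumes "a \<in> A" and "f a = c" and "\<And>x. x \<in> A \<Longrightarrow> c \<le> f x"
  shows "(INF x\<in>A. f x) = c"
  using assms by (intro cInf_eq_minimum) auto

lemma abs_af_eval_le:
  assumes "wf_Lstr S" and "\<forall>n. e n \<in> Mcar S" and "set_af \<phi> \<subseteq> Mcar S"
  shows "\<bar>af_eval S e \<phi>\<bar> \<le> af_bound \<phi>"
  using assms(2,3)
proof (induction \<phi> arbitrary: e)
  case (ADist s t)
  then have "tm_eval S e s \<in> Mcar S" "tm_eval S e t \<in> Mcar S"
    using assms(1) by (auto intro!: tm_eval_in)
  then show ?case
    using assms(1) by (auto simp: wf_Lstr_def)
next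
  case (AAdd \<phi> \<psi>)
  then show ?case
    by (auto intro!: order.trans[OF abs_triangle_ineq add_mono])
next
  case (AScal r \<phi>)
  then show ?case
    by (auto simp: abs_mult intro!: mult_left_mono)
next
  case (ASup n \<phi>)
  then show ?case
    using assms(1) by (auto simp: wf_Lstr_def intro!: abs_SUP_le)
next
  case (AInf n \<phi>)
  then show ?case
    using assms(1) by (auto simp: wf_Lstr_def intro!: abs_INF_le)
qed simp

lemma af_eval_AInf_le:
  assumes "wf_Lstr S" and "\<forall>n. e n \<in> Mcar S" and "set_af \<phi> \<subseteq> Mcar S" and "b \<in> Mcar S"
  shows "af_eval S e (AInf k \<phi>) \<le> af_eval S (e(k := b)) \<phi>"
proof -
  have "bdd_below ((\<lambda>b. af_eval S (e(k := b)) \<phi>) ` Mcar S)"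
    using abs_af_eval_le[OF assms(1) _ assms(3)] assms(2)
    by (intro bdd_image_if_abs_le[where B = "af_bound \<phi>"]) simp
  then show ?thesis
    unfolding af_eval.simps using assms(4) by (rule cINF_lower)
qed

definition holds :: "'a lstr \<Rightarrow> 'a af \<Rightarrow> bool" where
  "holds S \<phi> \<longleftrightarrow> (\<forall>e. (\<forall>n. e n \<in> Mcar S) \<longrightarrow> 0 \<le> af_eval S e \<phi>)"

text \<open>AA only speaks about sentences; a condition \<open>\<phi> \<ge> 0\<close> is transferred through its universal
  closure, which for conditions is an iterated infimum.\<close>
definition AInfs :: "nat list \<Rightarrow> 'a af \<Rightarrow> 'a af" where
  "AInfs ks \<phi> = foldr AInf ks \<phi>"

lemma fv_af_AInfs: "fv_af (AInfs ks \<phi>) = fv_af \<phi> - set ks"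
  by (induction ks) (auto simp: AInfs_def)

lemma set_af_AInfs: "set_af (AInfs ks \<phi>) = set_af \<phi>"
  by (induction ks) (auto simp: AInfs_def)

lemma map_af_AInfs: "map_af f (AInfs ks \<phi>) = AInfs ks (map_af f \<phi>)"
  by (induction ks) (auto simp: AInfs_def)

lemma holds_imp_AInfs_nonneg:
  assumes "holds S \<phi>" and "\<forall>n. e n \<in> Mcar S"
  shows "0 \<le> af_eval S e (AInfs ks \<phi>)"
  using assms(2)
proof (induction ks arbitrary: e)
  case Nil
  then show ?case
    using assms(1) by (simp add: holds_def AInfs_def)
next
  case (Cons k ks)
  then have "Mcar S \<noteq> {}"
    by blast
  with Cons show ?case
    by (auto simp: AInfs_def intro!: cINF_greatest)
qed

lemma AInfs_nonneg_imp:
  assumes S: "wf_Lstr S" "set_af \<phi> \<subseteq> Mcar S"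
    and e: "\<forall>n. e n \<in> Mcar S" "0 \<le> af_eval S e (AInfs ks \<phi>)"
    and e': "\<forall>n. e' n \<in> Mcar S" "\<forall>n. n \<notin> set ks \<longrightarrow> e' n = e n"
  shows "0 \<le> af_eval S e' \<phi>"
  using e e'(2)
proof (induction ks arbitrary: e)
  case Nil
  then have "e' = e"
    by (simp add: fun_eq_iff)
  with Nil show ?case
    by (simp add: AInfs_def)
next
  case (Cons k ks)
  let ?e = "e(k := e' k)"
  have e_in: "\<forall>n. ?e n \<in> Mcar S"
    using Cons.prems(1) e'(1) by simp
  have "af_eval S e (AInf k (AInfs ks \<phi>)) \<le> af_eval S ?e (AInfs ks \<phi>)"
    by (rule af_eval_AInf_le[OF S(1) Cons.prems(1)])
       (use S(2) e'(1) in \<open>simp_all add: set_af_AInfs\<close>)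
  then have nonneg: "0 \<le> af_eval S ?e (AInfs ks \<phi>)"
    using Cons.prems(2) by (simp add: AInfs_def)
  have agree: "\<forall>n. n \<notin> set ks \<longrightarrow> e' n = ?e n"
    using Cons.prems(3) by simp
  show ?case
    by (rule Cons.IH[OF e_in nonneg agree])
qed

lemma AInfs_nonneg_imp_holds:
  assumes "wf_Lstr S" and "set_af \<phi> \<subseteq> Mcar S" and "fv_af \<phi> \<subseteq> set ks"
    and "0 \<le> af_eval S (\<lambda>_. Mzero S) (AInfs ks \<phi>)"
  shows "holds S \<phi>"
  unfolding holds_def
proof (intro allI impI)
  fix e :: "nat \<Rightarrow> 'a" assume e: "\<forall>n. e n \<in> Mcar S"
  let ?e = "\<lambda>n. if n \<in> set ks then e n else Mzero S"
  have "0 \<le> af_eval S ?e \<phi>"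
    using AInfs_nonneg_imp[OF assms(1,2) _ assms(4), of ?e] assms(1) e
    by (simp add: wf_Lstr_def)
  moreover have "af_eval S ?e \<phi> = af_eval S e \<phi>"
    using assms(3) by (intro af_eval_cong) auto
  ultimately show "0 \<le> af_eval S e \<phi>"
    by simp
qed

lemma models_AA_holds:
  fixes \<phi> :: "nat af"
  assumes "models_AA M" and "wf_Lstr M" and "set_af \<phi> = {}"
    and "\<And>N :: nat lstr. is_PA N \<Longrightarrow> holds N \<phi>"
  shows "holds M (map_af (\<lambda>_. Mzero M) \<phi>)"
proof -
  obtain ks where ks: "set ks = fv_af \<phi>"
    using finite_list[OF finite_fv_af] by blast
  have "0 \<le> af_eval N (\<lambda>_. Mzero N) (AInfs ks \<phi>)" if "is_PA N" for N :: "nat lstr"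
    using that assms(4) PA_model.zero_in[OF PA_model.intro]
    by (intro holds_imp_AInfs_nonneg) auto
  moreover have "fv_af (AInfs ks \<phi>) = {}" and "set_af (AInfs ks \<phi>) = {}"
    using ks assms(3) by (simp_all add: fv_af_AInfs set_af_AInfs)
  ultimately have "0 \<le> af_eval M (\<lambda>_. Mzero M) (map_af (\<lambda>_. Mzero M) (AInfs ks \<phi>))"
    using assms(1) unfolding models_AA_def by blast
  then show ?thesis
    using assms(2,3) ks
    by (intro AInfs_nonneg_imp_holds) (auto simp: map_af_AInfs fv_af_map_af af.set_map)
qed

section \<open>Division with remainder in PA as affine conditions\<close>

definition le_defect :: "'a lstr \<Rightarrow> 'a \<Rightarrow> 'a \<Rightarrow> real" where
  "le_defect S a b = Md S (Mmeet S a b) a"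

definition divrem_defect :: "'a lstr \<Rightarrow> 'a \<Rightarrow> 'a \<Rightarrow> 'a \<Rightarrow> 'a \<Rightarrow> real" where
  "divrem_defect S x y u v = Md S y (Madd S (Mmul S x u) v) + le_defect S (Madd S v (Mone S)) x"

definition le_af :: "'a tm \<Rightarrow> 'a tm \<Rightarrow> 'a af" where
  "le_af s t = ADist (Meet s t) s"

definition divrem_af :: "'a tm \<Rightarrow> 'a tm \<Rightarrow> 'a tm \<Rightarrow> 'a tm \<Rightarrow> 'a af" where
  "divrem_af x y u v = AAdd (ADist y (Plus (Times x u) v)) (le_af (Plus v One) x)"

lemma af_eval_le_af [simp]:
  "af_eval S e (le_af s t) = le_defect S (tm_eval S e s) (tm_eval S e t)"
  by (simp add: le_af_def le_defect_def)

lemma af_eval_divrem_af [simp]: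
  "af_eval S e (divrem_af x y u v) =
     divrem_defect S (tm_eval S e x) (tm_eval S e y) (tm_eval S e u) (tm_eval S e v)"
  by (simp add: divrem_af_def divrem_defect_def)

abbreviation ASub :: "'a af \<Rightarrow> 'a af \<Rightarrow> 'a af" where
  "ASub \<phi> \<psi> \<equiv> AAdd \<phi> (AScal (-1) \<psi>)"

text \<open>Variables 0, \<dots>, 4 stand for \<open>x, u, v, u', v'\<close> in the first two sentences and
  for \<open>x, y, u, v\<close> in the third.\<close>

definition quotient_unique_af :: "'a af" where
  "quotient_unique_af =
     ASub (AAdd (ADist (Plus (Times (V 0) (V 1)) (V 2)) (Plus (Times (V 0) (V 3)) (V 4)))
             (AAdd (le_af (Plus (V 2) One) (V 0)) (le_af (Plus (V 4) One) (V 0))))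
          (ADist (V 1) (V 3))"

definition remainder_unique_af :: "'a af" where
  "remainder_unique_af =
     ASub (AAdd (ADist (V 1) (V 3))
             (ADist (Plus (Times (V 0) (V 1)) (V 2)) (Plus (Times (V 0) (V 3)) (V 4))))
          (ADist (V 2) (V 4))"

definition division_approx_af :: "'a af" where
  "division_approx_af =
     ASub (AScal 2 (ASub AOne (ADist (V 0) Zero)))
          (AInf 2 (AInf 3 (divrem_af (V 0) (V 1) (V 2) (V 3))))"

lemma set_af_sentences:
  "set_af quotient_unique_af = {}"
  "set_af remainder_unique_af = {}"
  "set_af division_approx_af = {}"
  by (simp_all add: quotient_unique_af_def remainder_unique_af_def division_approx_af_def
      le_af_def divrem_af_def)

lemma map_af_sentences:
  "map_af f quotient_unique_af = quotient_unique_af"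
  "map_af f remainder_unique_af = remainder_unique_af"
  "map_af f division_approx_af = division_approx_af"
  by (simp_all add: quotient_unique_af_def remainder_unique_af_def division_approx_af_def
      le_af_def divrem_af_def)

lemma holds_quotient_unique_af:
  assumes "Mzero S \<in> Mcar S"
  shows "holds S quotient_unique_af \<longleftrightarrow>
    (\<forall>x\<in>Mcar S. \<forall>u\<in>Mcar S. \<forall>v\<in>Mcar S. \<forall>u'\<in>Mcar S. \<forall>v'\<in>Mcar S.
       Md S u u' \<le> Md S (Madd S (Mmul S x u) v) (Madd S (Mmul S x u') v')
                   + le_defect S (Madd S v (Mone S)) x + le_defect S (Madd S v' (Mone S)) x)"
    (is "_ \<longleftrightarrow> (\<forall>x\<in>_. \<forall>u\<in>_. \<forall>v\<in>_. \<forall>u'\<in>_. \<forall>v'\<in>_. ?ineq x u v u' v')")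
proof
  assume H: "holds S quotient_unique_af"
  show "\<forall>x\<in>Mcar S. \<forall>u\<in>Mcar S. \<forall>v\<in>Mcar S. \<forall>u'\<in>Mcar S. \<forall>v'\<in>Mcar S. ?ineq x u v u' v'"
  proof (intro ballI)
    fix x u v u' v' assume "x \<in> Mcar S" "u \<in> Mcar S" "v \<in> Mcar S" "u' \<in> Mcar S" "v' \<in> Mcar S"
    with H assms have "0 \<le> af_eval S ((\<lambda>_. Mzero S)(0 := x, 1 := u, 2 := v, 3 := u', 4 := v'))
                              quotient_unique_af"
      unfolding holds_def by simp
    then show "?ineq x u v u' v'"
      by (simp add: quotient_unique_af_def)
  qed
next
  assume H: "\<forall>x\<in>Mcar S. \<forall>u\<in>Mcar S. \<forall>v\<in>Mcar S. \<forall>u'\<in>Mcar S. \<forall>v'\<in>Mcar S. ?ineq x u v u' v'"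
  show "holds S quotient_unique_af"
    unfolding holds_def
  proof (intro allI impI)
    fix e :: "nat \<Rightarrow> 'a" assume "\<forall>n. e n \<in> Mcar S"
    with H have "?ineq (e 0) (e 1) (e 2) (e 3) (e 4)"
      by blast
    then show "0 \<le> af_eval S e quotient_unique_af"
      by (simp add: quotient_unique_af_def)
  qed
qed

lemma holds_remainder_unique_af:
  assumes "Mzero S \<in> Mcar S"
  shows "holds S remainder_unique_af \<longleftrightarrow>
    (\<forall>x\<in>Mcar S. \<forall>u\<in>Mcar S. \<forall>v\<in>Mcar S. \<forall>u'\<in>Mcar S. \<forall>v'\<in>Mcar S.
       Md S v v' \<le> Md S u u' + Md S (Madd S (Mmul S x u) v) (Madd S (Mmul S x u') v'))"
    (is "_ \<longleftrightarrow> (\<forall>x\<in>_. \<forall>u\<in>_. \<forall>v\<in>_. \<forall>u'\<in>_. \<forall>v'\<in>_. ?ineq x u v u' v')")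
proof
  assume H: "holds S remainder_unique_af"
  show "\<forall>x\<in>Mcar S. \<forall>u\<in>Mcar S. \<forall>v\<in>Mcar S. \<forall>u'\<in>Mcar S. \<forall>v'\<in>Mcar S. ?ineq x u v u' v'"
  proof (intro ballI)
    fix x u v u' v' assume "x \<in> Mcar S" "u \<in> Mcar S" "v \<in> Mcar S" "u' \<in> Mcar S" "v' \<in> Mcar S"
    with H assms have "0 \<le> af_eval S ((\<lambda>_. Mzero S)(0 := x, 1 := u, 2 := v, 3 := u', 4 := v'))
                              remainder_unique_af"
      unfolding holds_def by simp
    then show "?ineq x u v u' v'"
      by (simp add: remainder_unique_af_def)
  qed
next
  assume H: "\<forall>x\<in>Mcar S. \<forall>u\<in>Mcar S. \<forall>v\<in>Mcar S. \<forall>u'\<in>Mcar S. \<forall>v'\<in>Mcar S. ?ineq x u v u' v'"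
  show "holds S remainder_unique_af"
    unfolding holds_def
  proof (intro allI impI)
    fix e :: "nat \<Rightarrow> 'a" assume "\<forall>n. e n \<in> Mcar S"
    with H have "?ineq (e 0) (e 1) (e 2) (e 3) (e 4)"
      by blast
    then show "0 \<le> af_eval S e remainder_unique_af"
      by (simp add: remainder_unique_af_def)
  qed
qed

lemma holds_division_approx_af:
  assumes "Mzero S \<in> Mcar S"
  shows "holds S division_approx_af \<longleftrightarrow>
    (\<forall>x\<in>Mcar S. \<forall>y\<in>Mcar S.
       (INF u\<in>Mcar S. INF v\<in>Mcar S. divrem_defect S x y u v) \<le> 2 * (1 - Md S x (Mzero S)))"
    (is "_ \<longleftrightarrow> (\<forall>x\<in>_. \<forall>y\<in>_. ?ineq x y)")
proof
  assume H: "holds S division_approx_af"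
  show "\<forall>x\<in>Mcar S. \<forall>y\<in>Mcar S. ?ineq x y"
  proof (intro ballI)
    fix x y assume "x \<in> Mcar S" "y \<in> Mcar S"
    with H assms have "0 \<le> af_eval S ((\<lambda>_. Mzero S)(0 := x, 1 := y)) division_approx_af"
      unfolding holds_def by simp
    then show "?ineq x y"
      by (simp add: division_approx_af_def)
  qed
next
  assume H: "\<forall>x\<in>Mcar S. \<forall>y\<in>Mcar S. ?ineq x y"
  show "holds S division_approx_af"
    unfolding holds_def
  proof (intro allI impI)
    fix e :: "nat \<Rightarrow> 'a" assume "\<forall>n. e n \<in> Mcar S"
    with H have "?ineq (e 0) (e 1)"
      by blast
    then show "0 \<le> af_eval S e division_approx_af"
      by (simp add: division_approx_af_def)
  qed
qed

context PA_model
begin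

lemma wf_Lstr: "wf_Lstr N"
  unfolding wf_Lstr_def
  by (auto simp: zero_in one_in add_in mul_in dist_eq meet_eq join_eq)

lemma le_defect_eq: "a \<in> C \<Longrightarrow> b \<in> C \<Longrightarrow> le_defect N a b = (if le a b then 0 else 1)"
  unfolding le_defect_def using add_0 zero_in by (auto simp: meet_eq dist_eq)

lemma quotient_dist_le:
  assumes "x \<in> C" "u \<in> C" "v \<in> C" "u' \<in> C" "v' \<in> C"
  shows "Md N u u' \<le>
    Md N (add (mul x u) v) (add (mul x u') v') + le_defect N (S v) x + le_defect N (S v') x"
  using division_unique[OF assms] assms
  by (auto simp: dist_eq le_defect_eq add_in mul_in Suc_in)

lemma remainder_dist_le:
  assumes "x \<in> C" "u \<in> C" "v \<in> C" "u' \<in> C" "v' \<in> C"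
  shows "Md N v v' \<le> Md N u u' + Md N (add (mul x u) v) (add (mul x u') v')"
  using add_left_cancel[of v v' "mul x u"] assms by (auto simp: dist_eq add_in mul_in)

lemma divrem_defect_INF_le:
  assumes x: "x \<in> C" and y: "y \<in> C"
  shows "(INF u\<in>C. INF v\<in>C. divrem_defect N x y u v) \<le> 2 * (1 - Md N x z)"
proof -
  have nonneg: "0 \<le> divrem_defect N x y u v" if "u \<in> C" "v \<in> C" for u v
    using that x y by (simp add: divrem_defect_def le_defect_eq dist_eq add_in mul_in Suc_in)
  show ?thesis
  proof (cases "x = z")
    case True
    have "(INF u\<in>C. INF v\<in>C. divrem_defect N x y u v) \<le> divrem_defect N x y z z"
      by (rule INF_INF_le) (use zero_in nonneg in auto)
    also have "\<dots> \<le> 2"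
      using x y zero_in by (simp add: divrem_defect_def le_defect_eq dist_eq add_in mul_in Suc_in)
    finally show ?thesis
      using True zero_in by (simp add: dist_eq)
  next
    case False
    then obtain u v where uv: "u \<in> C" "v \<in> C" "y = add (mul x u) v" "le (S v) x"
      using division_exists[OF x _ y] by blast
    have "(INF u\<in>C. INF v\<in>C. divrem_defect N x y u v) \<le> divrem_defect N x y u v"
      by (rule INF_INF_le) (use uv nonneg in auto)
    also have "\<dots> = 0"
      using x uv by (simp add: divrem_defect_def le_defect_eq dist_eq Suc_in add_in mul_in)
    finally show ?thesis
      using False x zero_in by (simp add: dist_eq)
  qed
qed

lemma holds_quotient_unique: "holds N quotient_unique_af"
  using quotient_dist_le by (simp add: holds_quotient_unique_af[OF zero_in])

lemma holds_remainder_unique: "holds N remainder_unique_af"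
  using remainder_dist_le by (simp add: holds_remainder_unique_af[OF zero_in])

lemma holds_division_approx: "holds N division_approx_af"
  using divrem_defect_INF_le by (simp add: holds_division_approx_af[OF zero_in])

end

section \<open>Division with remainder in models of AA\<close>

lemma lip2_closed: "lip2 S f \<Longrightarrow> a \<in> Mcar S \<Longrightarrow> b \<in> Mcar S \<Longrightarrow> f a b \<in> Mcar S"
  unfolding lip2_def by blast

lemma lip2_dist_left:
  "lip2 S f \<Longrightarrow> a \<in> Mcar S \<Longrightarrow> a' \<in> Mcar S \<Longrightarrow> b \<in> Mcar S \<Longrightarrow> Md S (f a b) (f a' b) \<le> Md S a a'"
  unfolding lip2_def by blast

lemma lip2_dist_right:
  "lip2 S f \<Longrightarrow> a \<in> Mcar S \<Longrightarrow> a' \<in> Mcar S \<Longrightarrow> b \<in> Mcar S \<Longrightarrow> Md S (f b a) (f b a') \<le> Md S a a'"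
  unfolding lip2_def by blast

locale L_structure =
  fixes M :: "'a lstr"
  assumes Lstr: "is_Lstr M"
begin

abbreviation "C \<equiv> Mcar M"
abbreviation "D \<equiv> Md M"
abbreviation "add \<equiv> Madd M"
abbreviation "mul \<equiv> Mmul M"
abbreviation "S x \<equiv> add x (Mone M)"

lemma zero_in: "Mzero M \<in> C" and one_in: "Mone M \<in> C"
  and dist_nonneg: "a \<in> C \<Longrightarrow> b \<in> C \<Longrightarrow> 0 \<le> D a b"
  and dist_le_1: "a \<in> C \<Longrightarrow> b \<in> C \<Longrightarrow> D a b \<le> 1"
  and dist_eq_0_iff: "a \<in> C \<Longrightarrow> b \<in> C \<Longrightarrow> D a b = 0 \<longleftrightarrow> a = b"
  and dist_commute: "a \<in> C \<Longrightarrow> b \<in> C \<Longrightarrow> D a b = D b a"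
  and dist_triangle: "a \<in> C \<Longrightarrow> b \<in> C \<Longrightarrow> c \<in> C \<Longrightarrow> D a c \<le> D a b + D b c"
  and lip_add: "lip2 M add" and lip_mul: "lip2 M mul"
  and lip_meet: "lip2 M (Mmeet M)" and lip_join: "lip2 M (Mjoin M)"
  using Lstr unfolding is_Lstr_def by simp_all

lemma complete:
  fixes s :: "nat \<Rightarrow> 'a"
  assumes "\<forall>n. s n \<in> C" and "\<forall>e>0. \<exists>N. \<forall>m\<ge>N. \<forall>n\<ge>N. D (s m) (s n) < e"
  shows "\<exists>l\<in>C. \<forall>e>0. \<exists>N. \<forall>n\<ge>N. D (s n) l < e"
proof -
  have "\<forall>s :: nat \<Rightarrow> 'a. (\<forall>n. s n \<in> C) \<longrightarrow> (\<forall>e>0. \<exists>N. \<forall>m\<ge>N. \<forall>n\<ge>N. D (s m) (s n) < e) \<longrightarrow>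
      (\<exists>l\<in>C. \<forall>e>0. \<exists>N. \<forall>n\<ge>N. D (s n) l < e)"
    using Lstr unfolding is_Lstr_def by (elim conjE) assumption
  with assms show ?thesis
    by blast
qed

lemma add_in: "a \<in> C \<Longrightarrow> b \<in> C \<Longrightarrow> add a b \<in> C"
  and mul_in: "a \<in> C \<Longrightarrow> b \<in> C \<Longrightarrow> mul a b \<in> C"
  and meet_in: "a \<in> C \<Longrightarrow> b \<in> C \<Longrightarrow> Mmeet M a b \<in> C"
  by (simp_all add: lip2_closed lip_add lip_mul lip_meet)

lemma Suc_in: "a \<in> C \<Longrightarrow> S a \<in> C"
  by (simp add: add_in one_in)

lemma wf_Lstr: "wf_Lstr M"
  unfolding wf_Lstr_def
  by (simp add: zero_in one_in dist_nonneg dist_le_1 add_in mul_in meet_in lip2_closed[OF lip_join])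

lemma dist_triangle_left: "a \<in> C \<Longrightarrow> b \<in> C \<Longrightarrow> c \<in> C \<Longrightarrow> D a c \<le> D b a + D b c"
  using dist_triangle[of a b c] dist_commute[of a b] by simp

lemma dist_add_mul_le:
  assumes "x \<in> C" "u \<in> C" "v \<in> C" "u' \<in> C" "v' \<in> C"
  shows "D (add (mul x u) v) (add (mul x u') v') \<le> D u u' + D v v'"
proof -
  have "D (add (mul x u) v) (add (mul x u') v')
        \<le> D (add (mul x u) v) (add (mul x u') v) + D (add (mul x u') v) (add (mul x u') v')"
    using assms by (intro dist_triangle) (simp_all add: add_in mul_in)
  also have "\<dots> \<le> D (mul x u) (mul x u') + D v v'"
    using assms
    by (intro add_mono lip2_dist_left[OF lip_add] lip2_dist_right[OF lip_add]) (simp_all add: mul_in)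
  also have "\<dots> \<le> D u u' + D v v'"
    using assms by (simp add: lip2_dist_right[OF lip_mul])
  finally show ?thesis .
qed

lemma le_defect_le:
  assumes "a \<in> C" "a' \<in> C" "b \<in> C"
  shows "le_defect M a' b \<le> le_defect M a b + 2 * D a a'"
proof -
  have "le_defect M a' b \<le> D (Mmeet M a' b) (Mmeet M a b) + D (Mmeet M a b) a + D a a'"
    using assms dist_triangle[of "Mmeet M a' b" "Mmeet M a b" a']
      dist_triangle[of "Mmeet M a b" a a']
    unfolding le_defect_def by (simp add: meet_in)
  also have "\<dots> \<le> D a' a + le_defect M a b + D a a'"
    using assms by (simp add: le_defect_def lip2_dist_left[OF lip_meet])
  finally show ?thesis
    using assms dist_commute by simp
qed

lemma divrem_defect_nonneg:
  "x \<in> C \<Longrightarrow> y \<in> C \<Longrightarrow> u \<in> C \<Longrightarrow> v \<in> C \<Longrightarrow> 0 \<le> divrem_defect M x y u v"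
  by (simp add: divrem_defect_def le_defect_def dist_nonneg add_in mul_in meet_in Suc_in)

lemma divrem_defect_eq_0_iff:
  "x \<in> C \<Longrightarrow> y \<in> C \<Longrightarrow> u \<in> C \<Longrightarrow> v \<in> C \<Longrightarrow> divrem_defect M x y u v = 0 \<longleftrightarrow> divrem M x y u v"
  unfolding divrem_defect_def le_defect_def divrem_def leq_def
  by (simp add: add_nonneg_eq_0_iff dist_nonneg dist_eq_0_iff add_in mul_in meet_in Suc_in)

lemma divrem_defect_lipschitz:
  assumes "x \<in> C" "y \<in> C" "u \<in> C" "v \<in> C" "u' \<in> C" "v' \<in> C"
  shows "divrem_defect M x y u' v' \<le> divrem_defect M x y u v + D u u' + 3 * D v v'"
proof -
  have "D y (add (mul x u') v') \<le> D y (add (mul x u) v) + D u u' + D v v'"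
    using assms dist_triangle[of y "add (mul x u) v" "add (mul x u') v'"]
      dist_add_mul_le[of x u v u' v']
    by (simp add: add_in mul_in)
  moreover have "le_defect M (S v') x \<le> le_defect M (S v) x + 2 * D v v'"
    using assms le_defect_le[of "S v" "S v'" x] lip2_dist_left[OF lip_add, of v v' "Mone M"] one_in
    by (simp add: Suc_in)
  ultimately show ?thesis
    unfolding divrem_defect_def by simp
qed

lemma convergent_if_dist_le:
  fixes s :: "nat \<Rightarrow> 'a" and r :: "nat \<Rightarrow> real"
  assumes s: "\<And>n. s n \<in> C" and r: "r \<longlonglongrightarrow> 0" and close: "\<And>m n. D (s m) (s n) \<le> r m + r n"
  shows "\<exists>l\<in>C. (\<lambda>n. D (s n) l) \<longlonglongrightarrow> 0"
proof -
  have "\<exists>N. \<forall>m\<ge>N. \<forall>n\<ge>N. D (s m) (s n) < e" if "0 < e" for e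
  proof -
    from r obtain N where N: "\<forall>n\<ge>N. norm (r n - 0) < e / 2"
      using \<open>0 < e\<close> unfolding LIMSEQ_iff by (meson half_gt_zero)
    have "D (s m) (s n) < e" if "m \<ge> N" "n \<ge> N" for m n
    proof -
      have "\<bar>r m\<bar> < e / 2" and "\<bar>r n\<bar> < e / 2"
        using N that by simp_all
      then show ?thesis
        using close[of m n] by (simp add: abs_less_iff)
    qed
    then show ?thesis
      by blast
  qed
  then obtain l where "l \<in> C" and l: "\<forall>e>0. \<exists>N. \<forall>n\<ge>N. D (s n) l < e"
    using complete[of s] s by blast
  moreover have "(\<lambda>n. D (s n) l) \<longlonglongrightarrow> 0"
    unfolding LIMSEQ_iff using l s \<open>l \<in> C\<close> dist_nonneg by simp
  ultimately show ?thesis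
    by blast
qed

lemma convergent_if_defect_le:
  fixes F :: "'a \<Rightarrow> 'a \<Rightarrow> real" and U V :: "nat \<Rightarrow> 'a" and \<delta> :: "nat \<Rightarrow> real"
  assumes U: "\<And>n. U n \<in> C" and V: "\<And>n. V n \<in> C"
    and UV: "\<And>n. F (U n) (V n) \<le> \<delta> n" and \<delta>: "\<delta> \<longlonglongrightarrow> 0" and K: "0 \<le> K"
    and cluster: "\<And>u v u' v'. u \<in> C \<Longrightarrow> v \<in> C \<Longrightarrow> u' \<in> C \<Longrightarrow> v' \<in> C \<Longrightarrow>
                    D u u' + D v v' \<le> K * (F u v + F u' v')"
  shows "\<exists>ul\<in>C. \<exists>vl\<in>C. (\<lambda>n. D (U n) ul) \<longlonglongrightarrow> 0 \<and> (\<lambda>n. D (V n) vl) \<longlonglongrightarrow> 0"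
proof -
  have K\<delta>: "(\<lambda>n. K * \<delta> n) \<longlonglongrightarrow> 0"
    using \<delta> by (auto intro: tendsto_eq_intros)
  have UV_close: "D (U m) (U n) + D (V m) (V n) \<le> K * \<delta> m + K * \<delta> n" for m n
  proof -
    have "D (U m) (U n) + D (V m) (V n) \<le> K * (F (U m) (V m) + F (U n) (V n))"
      using cluster U V by simp
    also have "\<dots> \<le> K * (\<delta> m + \<delta> n)"
      using K UV[of m] UV[of n] by (intro mult_left_mono) simp_all
    finally show ?thesis
      by (simp add: distrib_left)
  qed
  have "D (U m) (U n) \<le> K * \<delta> m + K * \<delta> n" for m n
    using UV_close[of m n] dist_nonneg[OF V[of m] V[of n]] by linarith
  moreover have "D (V m) (V n) \<le> K * \<delta> m + K * \<delta> n" for m n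
    using UV_close[of m n] dist_nonneg[OF U[of m] U[of n]] by linarith
  ultimately obtain ul vl where "ul \<in> C" "(\<lambda>n. D (U n) ul) \<longlonglongrightarrow> 0"
    and "vl \<in> C" "(\<lambda>n. D (V n) vl) \<longlonglongrightarrow> 0"
    using convergent_if_dist_le[of U, OF U K\<delta>] convergent_if_dist_le[of V, OF V K\<delta>] by metis
  then show ?thesis
    by blast
qed

lemma exists_zero_of_defect:
  fixes F :: "'a \<Rightarrow> 'a \<Rightarrow> real" and K :: real
  assumes nonneg: "\<And>u v. u \<in> C \<Longrightarrow> v \<in> C \<Longrightarrow> 0 \<le> F u v"
    and approx: "\<And>\<epsilon>. 0 < \<epsilon> \<Longrightarrow> \<exists>u\<in>C. \<exists>v\<in>C. F u v < \<epsilon>"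
    and K: "0 \<le> K"
    and cluster: "\<And>u v u' v'. u \<in> C \<Longrightarrow> v \<in> C \<Longrightarrow> u' \<in> C \<Longrightarrow> v' \<in> C \<Longrightarrow>
                    D u u' + D v v' \<le> K * (F u v + F u' v')"
    and lipschitz: "\<And>u v u' v'. u \<in> C \<Longrightarrow> v \<in> C \<Longrightarrow> u' \<in> C \<Longrightarrow> v' \<in> C \<Longrightarrow>
                    F u' v' \<le> F u v + K * (D u u' + D v v')"
  shows "\<exists>u\<in>C. \<exists>v\<in>C. F u v = 0"
proof -
  define \<delta> :: "nat \<Rightarrow> real" where "\<delta> n = inverse (real (Suc n))" for n
  have \<delta>_lim: "\<delta> \<longlonglongrightarrow> 0"
    unfolding \<delta>_def by (rule LIMSEQ_inverse_real_of_nat)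
  have "\<exists>u v. u \<in> C \<and> v \<in> C \<and> F u v < \<delta> n" for n
    using approx[of "\<delta> n"] by (auto simp: \<delta>_def)
  then obtain U V where U: "\<And>n. U n \<in> C" and V: "\<And>n. V n \<in> C"
    and UV: "\<And>n. F (U n) (V n) < \<delta> n"
    by metis
  have UV_le: "F (U n) (V n) \<le> \<delta> n" for n
    using UV[of n] by simp
  obtain ul vl where ul: "ul \<in> C" "(\<lambda>n. D (U n) ul) \<longlonglongrightarrow> 0"
    and vl: "vl \<in> C" "(\<lambda>n. D (V n) vl) \<longlonglongrightarrow> 0"
    using convergent_if_defect_le[where U = U and V = V, OF U V UV_le \<delta>_lim K cluster] by blast
  have "F ul vl \<le> \<delta> n + K * (D (U n) ul + D (V n) vl)" for n
    using lipschitz[OF U[of n] V[of n] ul(1) vl(1)] UV[of n] by linarith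
  moreover have "(\<lambda>n. \<delta> n + K * (D (U n) ul + D (V n) vl)) \<longlonglongrightarrow> 0"
    using \<delta>_lim ul(2) vl(2) by (auto intro!: tendsto_eq_intros)
  ultimately have "F ul vl \<le> 0"
    by (intro LIMSEQ_le_const) auto
  then show ?thesis
    using nonneg[OF ul(1) vl(1)] ul(1) vl(1) by force
qed

end

locale AA_model = L_structure +
  assumes AA: "models_AA M"
begin

lemma holds_quotient_unique: "holds M quotient_unique_af"
proof -
  have "holds M (map_af (\<lambda>_. Mzero M) (quotient_unique_af :: nat af))"
    by (rule models_AA_holds[OF AA wf_Lstr set_af_sentences(1)])
       (rule PA_model.holds_quotient_unique[OF PA_model.intro])
  then show ?thesis
    by (simp only: map_af_sentences)
qed

lemma holds_remainder_unique: "holds M remainder_unique_af"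
proof -
  have "holds M (map_af (\<lambda>_. Mzero M) (remainder_unique_af :: nat af))"
    by (rule models_AA_holds[OF AA wf_Lstr set_af_sentences(2)])
       (rule PA_model.holds_remainder_unique[OF PA_model.intro])
  then show ?thesis
    by (simp only: map_af_sentences)
qed

lemma holds_division_approx: "holds M division_approx_af"
proof -
  have "holds M (map_af (\<lambda>_. Mzero M) (division_approx_af :: nat af))"
    by (rule models_AA_holds[OF AA wf_Lstr set_af_sentences(3)])
       (rule PA_model.holds_division_approx[OF PA_model.intro])
  then show ?thesis
    by (simp only: map_af_sentences)
qed

lemma quotient_dist_le_defect:
  assumes "x \<in> C" "y \<in> C" "u \<in> C" "v \<in> C" "u' \<in> C" "v' \<in> C"
  shows "D u u' \<le> divrem_defect M x y u v + divrem_defect M x y u' v'"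
proof -
  let ?p = "add (mul x u) v" and ?p' = "add (mul x u') v'"
  have "D u u' \<le> D ?p ?p' + le_defect M (S v) x + le_defect M (S v') x"
    using holds_quotient_unique assms by (simp add: holds_quotient_unique_af[OF zero_in])
  moreover have "D ?p ?p' \<le> D y ?p + D y ?p'"
    using assms by (intro dist_triangle_left) (simp_all add: add_in mul_in)
  ultimately show ?thesis
    unfolding divrem_defect_def by simp
qed

lemma remainder_dist_le_defect:
  assumes "x \<in> C" "y \<in> C" "u \<in> C" "v \<in> C" "u' \<in> C" "v' \<in> C"
  shows "D v v' \<le> 2 * (divrem_defect M x y u v + divrem_defect M x y u' v')"
proof -
  let ?p = "add (mul x u) v" and ?p' = "add (mul x u') v'"
  have "D v v' \<le> D u u' + D ?p ?p'"
    using holds_remainder_unique assms by (simp add: holds_remainder_unique_af[OF zero_in])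
  moreover have "D ?p ?p' \<le> D y ?p + D y ?p'"
    using assms by (intro dist_triangle_left) (simp_all add: add_in mul_in)
  moreover have "0 \<le> le_defect M (S v) x" "0 \<le> le_defect M (S v') x"
    using assms by (simp_all add: le_defect_def dist_nonneg meet_in Suc_in)
  ultimately show ?thesis
    using quotient_dist_le_defect[OF assms] unfolding divrem_defect_def by argo
qed

lemma divrem_approx:
  assumes x: "x \<in> C" "normal M x" and y: "y \<in> C" and "0 < \<epsilon>"
  shows "\<exists>u\<in>C. \<exists>v\<in>C. divrem_defect M x y u v < \<epsilon>"
proof (rule ccontr)
  assume "\<not> ?thesis"
  then have "\<epsilon> \<le> (INF u\<in>C. INF v\<in>C. divrem_defect M x y u v)"
    using zero_in by (force intro!: cINF_greatest)
  also have "\<dots> \<le> 2 * (1 - D x (Mzero M))"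
    using holds_division_approx x(1) y by (simp add: holds_division_approx_af[OF zero_in])
  also have "\<dots> = 0"
    using x(2) by (simp add: normal_def)
  finally show False
    using \<open>0 < \<epsilon>\<close> by simp
qed

lemma divrem_exists:
  assumes "x \<in> C" "normal M x" "y \<in> C"
  shows "\<exists>u\<in>C. \<exists>v\<in>C. divrem M x y u v"
proof -
  have "\<exists>u\<in>C. \<exists>v\<in>C. divrem_defect M x y u v = 0"
  proof (rule exists_zero_of_defect[where K = 3])
    fix u v u' v' assume uv: "u \<in> C" "v \<in> C" "u' \<in> C" "v' \<in> C"
    show "D u u' + D v v' \<le> 3 * (divrem_defect M x y u v + divrem_defect M x y u' v')"
      using quotient_dist_le_defect[OF assms(1,3) uv] remainder_dist_le_defect[OF assms(1,3) uv]
      by argo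
    show "divrem_defect M x y u' v' \<le> divrem_defect M x y u v + 3 * (D u u' + D v v')"
      using divrem_defect_lipschitz[OF assms(1,3) uv] dist_nonneg[OF uv(1,3)] by argo
  qed (use assms divrem_defect_nonneg divrem_approx in auto)
  then show ?thesis
    using assms divrem_defect_eq_0_iff by blast
qed

lemma divrem_functions_exist:
  "\<exists>f g. \<forall>x\<in>C. \<forall>y\<in>C. normal M x \<longrightarrow> f x y \<in> C \<and> g x y \<in> C \<and> divrem M x y (f x y) (g x y)"
proof -
  define p where "p x y = (SOME p. p \<in> C \<times> C \<and> divrem M x y (fst p) (snd p))" for x y
  have p: "p x y \<in> C \<times> C \<and> divrem M x y (fst (p x y)) (snd (p x y))"
    if xy: "x \<in> C" "y \<in> C" "normal M x" for x y
  proof -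
    obtain u v where "u \<in> C" "v \<in> C" "divrem M x y u v"
      using divrem_exists[OF xy(1,3,2)] by blast
    then have "(u, v) \<in> C \<times> C \<and> divrem M x y (fst (u, v)) (snd (u, v))"
      by simp
    then show ?thesis
      unfolding p_def by (rule someI)
  qed
  show ?thesis
    by (intro exI[of _ "\<lambda>x y. fst (p x y)"] exI[of _ "\<lambda>x y. snd (p x y)"] ballI impI)
       (use p in \<open>simp add: mem_Times_iff\<close>)
qed

lemma divrem_unique:
  assumes "x \<in> C" "y \<in> C" "u \<in> C" "v \<in> C" "u' \<in> C" "v' \<in> C"
    and "divrem M x y u v" and "divrem M x y u' v'"
  shows "u = u' \<and> v = v'"
proof -
  have "divrem_defect M x y u v = 0" "divrem_defect M x y u' v' = 0"
    using assms divrem_defect_eq_0_iff by simp_all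
  then have "D u u' \<le> 0" "D v v' \<le> 0"
    using quotient_dist_le_defect[OF assms(1-6)] remainder_dist_le_defect[OF assms(1-6)] by simp_all
  then show ?thesis
    using assms(3-6) dist_nonneg dist_eq_0_iff by (meson order.antisym)
qed

text \<open>No approximation is needed: \<open>d(h(x, y), z)\<close> is exactly the infimum over \<open>(u, v)\<close> of
  \<open>d(sel u v, z) + 2 defect(u, v)\<close>, attained at the quotient and remainder of \<open>y\<close> by \<open>x\<close>.\<close>
lemma definable_E_selection:
  fixes h sel :: "'a \<Rightarrow> 'a \<Rightarrow> 'a" and t :: "'a tm"
  assumes t: "\<And>e. tm_eval M e t = sel (e 3) (e 4)" "fv_tm t \<subseteq> {3, 4}" "set_tm t = {}"
    and sel_in: "\<And>u v. u \<in> C \<Longrightarrow> v \<in> C \<Longrightarrow> sel u v \<in> C"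
    and sel_close: "\<And>x y u v u' v'. x \<in> C \<Longrightarrow> y \<in> C \<Longrightarrow>
        u \<in> C \<Longrightarrow> v \<in> C \<Longrightarrow> u' \<in> C \<Longrightarrow> v' \<in> C \<Longrightarrow>
        D (sel u v) (sel u' v') \<le> 2 * (divrem_defect M x y u v + divrem_defect M x y u' v')"
    and h: "\<And>x y. x \<in> C \<Longrightarrow> y \<in> C \<Longrightarrow> normal M x \<Longrightarrow>
        \<exists>u\<in>C. \<exists>v\<in>C. divrem M x y u v \<and> h x y = sel u v"
  shows "definable_E M h"
proof -
  let ?\<phi> = "AInf 3 (AInf 4 (AAdd (ADist t (V 2)) (AScal 2 (divrem_af (V 0) (V 1) (V 3) (V 4)))))"
  have exact: "D (h x y) z = af_eval M (\<lambda>n. if n = 0 then x else if n = 1 then y else z) ?\<phi>"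
    if xyz: "x \<in> C" "y \<in> C" "z \<in> C" and "normal M x" for x y z
  proof -
    obtain u0 v0 where uv0: "u0 \<in> C" "v0 \<in> C" "divrem M x y u0 v0" "h x y = sel u0 v0"
      using h xyz \<open>normal M x\<close> by blast
    then have zero: "divrem_defect M x y u0 v0 = 0"
      using xyz divrem_defect_eq_0_iff by simp
    let ?G = "\<lambda>u v. D (sel u v) z + 2 * divrem_defect M x y u v"
    have lower: "D (h x y) z \<le> ?G u v" if "u \<in> C" "v \<in> C" for u v
      using dist_triangle[of "h x y" "sel u v" z] sel_close[OF xyz(1,2) uv0(1,2) that]
        zero uv0 that xyz sel_in
      by simp
    have "(INF u\<in>C. INF v\<in>C. ?G u v) = D (h x y) z"
    proof (rule INF_eq_attained[OF uv0(1)])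
      show "(INF v\<in>C. ?G u0 v) = D (h x y) z"
        using lower uv0 zero by (intro INF_eq_attained[OF uv0(2)]) simp_all
      show "D (h x y) z \<le> (INF v\<in>C. ?G u v)" if "u \<in> C" for u
        using lower that zero_in by (intro cINF_greatest) auto
    qed
    then show ?thesis
      using t(1) by simp
  qed
  show ?thesis
    unfolding definable_E_def
  proof (intro allI impI exI conjI)
    show "fv_af ?\<phi> \<subseteq> {0, 1, 2}" and "set_af ?\<phi> \<subseteq> C"
      using t(2,3) by (auto simp: divrem_af_def le_af_def)
  qed (use exact in simp)
qed

lemma definable_quotient:
  assumes "\<forall>x\<in>C. \<forall>y\<in>C. normal M x \<longrightarrow> f x y \<in> C \<and> g x y \<in> C \<and> divrem M x y (f x y) (g x y)"
  shows "definable_E M f"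
proof (rule definable_E_selection[where t = "V 3" and sel = "\<lambda>u v. u"])
  fix x y u v u' v' assume xyuv: "x \<in> C" "y \<in> C" "u \<in> C" "v \<in> C" "u' \<in> C" "v' \<in> C"
  have "D u u' \<le> divrem_defect M x y u v + divrem_defect M x y u' v'"
    by (rule quotient_dist_le_defect[OF xyuv])
  moreover have "0 \<le> divrem_defect M x y u v" and "0 \<le> divrem_defect M x y u' v'"
    using xyuv by (simp_all add: divrem_defect_nonneg)
  ultimately show "D u u' \<le> 2 * (divrem_defect M x y u v + divrem_defect M x y u' v')"
    by argo
qed (use assms in auto)

lemma definable_remainder:
  assumes "\<forall>x\<in>C. \<forall>y\<in>C. normal M x \<longrightarrow> f x y \<in> C \<and> g x y \<in> C \<and> divrem M x y (f x y) (g x y)"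
  shows "definable_E M g"
  by (rule definable_E_selection[where t = "V 4" and sel = "\<lambda>u v. v"])
     (use assms remainder_dist_le_defect in auto)

end

theorem mainTheorem9:
  fixes M :: "'a lstr"
  assumes "is_Lstr M" and "models_AA M" and "ext_aleph0_saturated M"
  shows "(\<forall>x\<in>Mcar M. \<forall>y\<in>Mcar M. normal M x \<longrightarrow>
            (\<forall>u\<in>Mcar M. \<forall>v\<in>Mcar M. \<forall>u'\<in>Mcar M. \<forall>v'\<in>Mcar M.
               divrem M x y u v \<and> divrem M x y u' v' \<longrightarrow> u = u' \<and> v = v'))
       \<and> (\<exists>f g. \<forall>x\<in>Mcar M. \<forall>y\<in>Mcar M. normal M x \<longrightarrow>
               f x y \<in> Mcar M \<and> g x y \<in> Mcar M \<and> divrem M x y (f x y) (g x y))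
       \<and> (\<forall>f g. (\<forall>x\<in>Mcar M. \<forall>y\<in>Mcar M. normal M x \<longrightarrow>
               f x y \<in> Mcar M \<and> g x y \<in> Mcar M \<and> divrem M x y (f x y) (g x y))
            \<longrightarrow> definable_E M f \<and> definable_E M g)"
proof -
  interpret AA_model M
    by (intro AA_model.intro L_structure.intro AA_model_axioms.intro assms(1,2))
  show ?thesis
  proof (intro conjI)
    show "\<forall>x\<in>C. \<forall>y\<in>C. normal M x \<longrightarrow> (\<forall>u\<in>C. \<forall>v\<in>C. \<forall>u'\<in>C. \<forall>v'\<in>C.
            divrem M x y u v \<and> divrem M x y u' v' \<longrightarrow> u = u' \<and> v = v')"
      using divrem_unique by simp
    show "\<exists>f g. \<forall>x\<in>C. \<forall>y\<in>C. normal M x \<longrightarrow> f x y \<in> C \<and> g x y \<in> C \<and> divrem M x y (f x y) (g x y)"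
      by (rule divrem_functions_exist)
    show "\<forall>f g. (\<forall>x\<in>C. \<forall>y\<in>C. normal M x \<longrightarrow> f x y \<in> C \<and> g x y \<in> C \<and> divrem M x y (f x y) (g x y))
            \<longrightarrow> definable_E M f \<and> definable_E M g"
      using definable_quotient definable_remainder by blast
  qed
qed

end
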